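(* Let $X$ be a topological space, $Y$ an Alexandroff space, $f:X\to Y$ a continuous surjection, and $\mathcal{S}=(\mathcal{O}(Y),\nabla_Y)$ a spacetime. Then there exists $\nabla_X:\mathcal{O}(X)\to\mathcal{O}(X)$ such that $\mathcal{T}=(\mathcal{O}(X),\nabla_X)$ is a spacetime and $f^{-1}:\mathcal{S}\to\mathcal{T}$ is a logical geometric map.
   Context: $\mathcal{O}(Z)$ denotes the locale of open subsets of a space $Z$ ordered by inclusion. A space is Alexandroff if arbitrary intersections of open sets are open. A spacetime is a pair $(\mathscr{X},\nabla)$ where $\mathscr{X}$ is a locale (complete lattice in which binary meet distributes over arbitrary joins; its monoidal structure is binary meet with unit the top) and $\nabla:\mathscr{X}\to\mathscr{X}$ preserves arbitrary joins. Its implication is $a\to b=\Box(a\Rightarrow b)$, where $\Box$ is the right adjoint of $\nabla$ and $\Rightarrow$ the Heyting implication; equivalently $a\wedge\nabla b\le c$ iff $b\le a\to c$. A geometric map $g:(\mathscr{X},\nabla_1)\to(\mathscr{Y},\nabla_2)$ between spacetimes is a map preserving arbitrary joins and finite meets with $g\nabla_1=\nabla_2 g$; it is logical if moreover it preserves the implication. *)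

theory Defs
  imports "HOL-Analysis.Analysis"
begin

text \<open>The locale O(Z) of open subsets of a topological space Z: joins are unions,
 binary meets are intersections, top is the whole space.\<close>

definition alexandroff_space :: "'a topology \<Rightarrow> bool" where
  "alexandroff_space Z \<longleftrightarrow>
     (\<forall>F. (\<forall>U\<in>F. openin Z U) \<longrightarrow> openin Z (topspace Z \<inter> \<Inter>F))"

definition spacetime :: "'a topology \<Rightarrow> ('a set \<Rightarrow> 'a set) \<Rightarrow> bool" where
  "spacetime Z N \<longleftrightarrow>
     (\<forall>U. openin Z U \<longrightarrow> openin Z (N U)) \<and>
     (\<forall>F. (\<forall>U\<in>F. openin Z U) \<longrightarrow> N (\<Union>F) = \<Union>(N ` F))"

definition heyting_imp :: "'a topology \<Rightarrow> 'a set \<Rightarrow> 'a set \<Rightarrow> 'a set" where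
  "heyting_imp Z a b = \<Union>{W. openin Z W \<and> W \<inter> a \<subseteq> b}"

text \<open>Box: the right adjoint of N on O(Z).\<close>
definition st_box :: "'a topology \<Rightarrow> ('a set \<Rightarrow> 'a set) \<Rightarrow> 'a set \<Rightarrow> 'a set" where
  "st_box Z N c = \<Union>{W. openin Z W \<and> N W \<subseteq> c}"

definition st_imp :: "'a topology \<Rightarrow> ('a set \<Rightarrow> 'a set) \<Rightarrow> 'a set \<Rightarrow> 'a set \<Rightarrow> 'a set" where
  "st_imp Z N a b = st_box Z N (heyting_imp Z a b)"

definition geometric_map ::
  "'a topology \<Rightarrow> ('a set \<Rightarrow> 'a set) \<Rightarrow> 'b topology \<Rightarrow> ('b set \<Rightarrow> 'b set) \<Rightarrow> ('a set \<Rightarrow> 'b set) \<Rightarrow> bool" where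
  "geometric_map Z1 N1 Z2 N2 g \<longleftrightarrow>
     (\<forall>U. openin Z1 U \<longrightarrow> openin Z2 (g U)) \<and>
     (\<forall>F. (\<forall>U\<in>F. openin Z1 U) \<longrightarrow> g (\<Union>F) = \<Union>(g ` F)) \<and>
     g (topspace Z1) = topspace Z2 \<and>
     (\<forall>U V. openin Z1 U \<longrightarrow> openin Z1 V \<longrightarrow> g (U \<inter> V) = g U \<inter> g V) \<and>
     (\<forall>U. openin Z1 U \<longrightarrow> g (N1 U) = N2 (g U))"

definition logical_map ::
  "'a topology \<Rightarrow> ('a set \<Rightarrow> 'a set) \<Rightarrow> 'b topology \<Rightarrow> ('b set \<Rightarrow> 'b set) \<Rightarrow> ('a set \<Rightarrow> 'b set) \<Rightarrow> bool" where
  "logical_map Z1 N1 Z2 N2 g \<longleftrightarrow>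
     geometric_map Z1 N1 Z2 N2 g \<and>
     (\<forall>U V. openin Z1 U \<longrightarrow> openin Z1 V \<longrightarrow>
        g (st_imp Z1 N1 U V) = st_imp Z2 N2 (g U) (g V))"

end

theory Submission
  imports Defs
begin

text \<open>Since Y is Alexandroff, the frame map f^-1 : O(Y) \<rightarrow> O(X) also preserves
  arbitrary intersections, so it has a left adjoint f_!, sending W to the smallest open
  set containing f(W); surjectivity of f gives f_! f^-1 = id. Put
  NX = f^-1 NY f_!. As a composite of left adjoints it preserves joins, and
  f_! f^-1 = id makes it commute with f^-1. The implication is preserved because the
  adjunctions chain: for open W,
  NX W \<inter> f^-1 U \<subseteq> f^-1 V  iff  NY (f_! W) \<inter> U \<subseteq> V  iff  f_! W \<subseteq> U \<rightarrow> V  iff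
  W \<subseteq> f^-1 (U \<rightarrow> V).\<close>

lemma subset_heyting_imp_iff:
  assumes "openin Z W"
  shows "W \<subseteq> heyting_imp Z a b \<longleftrightarrow> W \<inter> a \<subseteq> b"
  using assms unfolding heyting_imp_def by blast

lemma openin_st_box: "openin Z (st_box Z N c)"
  unfolding st_box_def by (rule openin_Union) auto

lemma openin_spacetime: "spacetime Z N \<Longrightarrow> openin Z U \<Longrightarrow> openin Z (N U)"
  unfolding spacetime_def by simp

lemma spacetime_Union:
  assumes "spacetime Z N" "\<And>U. U \<in> F \<Longrightarrow> openin Z U"
  shows "N (\<Union>F) = \<Union>(N ` F)"
  using assms unfolding spacetime_def by simp

lemma spacetime_mono:
  assumes "spacetime Z N" "openin Z A" "openin Z B" "A \<subseteq> B"
  shows "N A \<subseteq> N B"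
proof -
  have "N B = N (\<Union>{A, B})" using assms(4) by (simp add: sup.absorb2)
  also have "\<dots> = N A \<union> N B" using spacetime_Union[OF assms(1), of "{A, B}"] assms(2,3) by auto
  finally show ?thesis by blast
qed

lemma subset_st_box_iff:
  assumes "spacetime Z N" "openin Z W"
  shows "W \<subseteq> st_box Z N c \<longleftrightarrow> N W \<subseteq> c"
proof
  assume "N W \<subseteq> c"
  then show "W \<subseteq> st_box Z N c" using assms(2) unfolding st_box_def by blast
next
  assume W: "W \<subseteq> st_box Z N c"
  let ?S = "{W. openin Z W \<and> N W \<subseteq> c}"
  have "N (st_box Z N c) = \<Union>(N ` ?S)"
    unfolding st_box_def by (rule spacetime_Union[OF assms(1)]) simp
  then have "N (st_box Z N c) \<subseteq> c" by blast
  moreover have "N W \<subseteq> N (st_box Z N c)"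
    using spacetime_mono[OF assms(1,2) openin_st_box W] .
  ultimately show "N W \<subseteq> c" by blast
qed

lemma st_box_eqI:
  assumes "openin Z B" "\<And>W. openin Z W \<Longrightarrow> N W \<subseteq> c \<longleftrightarrow> W \<subseteq> B"
  shows "st_box Z N c = B"
  using assms unfolding st_box_def by blast

definition open_hull :: "'a topology \<Rightarrow> 'a set \<Rightarrow> 'a set" where
  "open_hull Z S = topspace Z \<inter> \<Inter>{V. openin Z V \<and> S \<subseteq> V}"

lemma openin_open_hull: "alexandroff_space Z \<Longrightarrow> openin Z (open_hull Z S)"
  unfolding alexandroff_space_def open_hull_def by auto

lemma open_hull_subset_iff:
  assumes "openin Z V" "S \<subseteq> topspace Z"
  shows "open_hull Z S \<subseteq> V \<longleftrightarrow> S \<subseteq> V"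
  using assms unfolding open_hull_def by blast

lemma open_hull_eq: "openin Z V \<Longrightarrow> open_hull Z V = V"
  unfolding open_hull_def using openin_subset by blast

lemma open_hull_Union:
  assumes "alexandroff_space Z" "\<And>S. S \<in> F \<Longrightarrow> S \<subseteq> topspace Z"
  shows "open_hull Z (\<Union>F) = \<Union>(open_hull Z ` F)"
proof (rule antisym)
  have "openin Z (\<Union>(open_hull Z ` F))"
    using openin_open_hull[OF assms(1)] by blast
  moreover have "S \<subseteq> open_hull Z S" if "S \<in> F" for S
    using assms(2)[OF that] unfolding open_hull_def by blast
  ultimately show "open_hull Z (\<Union>F) \<subseteq> \<Union>(open_hull Z ` F)"
    using assms(2) by (subst open_hull_subset_iff) blast+
  show "\<Union>(open_hull Z ` F) \<subseteq> open_hull Z (\<Union>F)"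
    unfolding open_hull_def by blast
qed

locale alexandroff_surjection =
  fixes X :: "'a topology" and Y :: "'b topology" and f :: "'a \<Rightarrow> 'b"
    and NY :: "'b set \<Rightarrow> 'b set"
  assumes alexandroff: "alexandroff_space Y"
    and continuous: "continuous_map X Y f"
    and surjective: "f ` topspace X = topspace Y"
    and spacetime: "spacetime Y NY"
begin

definition pullback :: "'b set \<Rightarrow> 'a set" where
  "pullback U = topspace X \<inter> f -` U"

definition induced_nabla :: "'a set \<Rightarrow> 'a set" where
  "induced_nabla W = pullback (NY (open_hull Y (f ` W)))"

lemma openin_pullback:
  assumes "openin Y U"
  shows "openin X (pullback U)"
proof -
  have "pullback U = {x \<in> topspace X. f x \<in> U}" unfolding pullback_def by blast
  then show ?thesis using openin_continuous_map_preimage[OF continuous assms] by simp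
qed

lemma image_subset_iff_subset_pullback:
  "W \<subseteq> topspace X \<Longrightarrow> f ` W \<subseteq> B \<longleftrightarrow> W \<subseteq> pullback B"
  unfolding pullback_def by blast

lemma image_pullback:
  assumes "U \<subseteq> topspace Y"
  shows "f ` pullback U = U"
proof -
  have "U \<subseteq> f ` topspace X" using assms by (simp add: surjective)
  then show ?thesis unfolding pullback_def by blast
qed

lemma pullback_subset_iff:
  assumes "A \<subseteq> topspace Y"
  shows "pullback A \<subseteq> pullback B \<longleftrightarrow> A \<subseteq> B"
proof
  assume "pullback A \<subseteq> pullback B"
  then have "f ` pullback A \<subseteq> B" unfolding pullback_def by blast
  then show "A \<subseteq> B" using image_pullback[OF assms] by simp
qed (auto simp: pullback_def)

lemma image_subset_topspace: "W \<subseteq> topspace X \<Longrightarrow> f ` W \<subseteq> topspace Y"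
  using surjective by blast

lemma openin_induced_nabla: "openin X (induced_nabla W)"
  unfolding induced_nabla_def
  by (intro openin_pullback openin_spacetime[OF spacetime] openin_open_hull[OF alexandroff])

lemma spacetime_induced_nabla: "spacetime X induced_nabla"
  unfolding spacetime_def
proof (intro conjI allI impI openin_induced_nabla)
  fix F assume "\<forall>U\<in>F. openin X U"
  then have "\<And>S. S \<in> (`) f ` F \<Longrightarrow> S \<subseteq> topspace Y"
    using image_subset_topspace openin_subset by blast
  then have "open_hull Y (f ` \<Union>F) = \<Union>((\<lambda>W. open_hull Y (f ` W)) ` F)"
    unfolding image_Union by (subst open_hull_Union[OF alexandroff]) (auto simp: image_image)
  moreover have "NY (\<Union>((\<lambda>W. open_hull Y (f ` W)) ` F)) = \<Union>((\<lambda>W. NY (open_hull Y (f ` W))) ` F)"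
    by (subst spacetime_Union[OF spacetime]) (auto simp: image_image openin_open_hull[OF alexandroff])
  ultimately show "induced_nabla (\<Union>F) = \<Union>(induced_nabla ` F)"
    unfolding induced_nabla_def pullback_def by auto
qed

lemma induced_nabla_pullback: "openin Y U \<Longrightarrow> induced_nabla (pullback U) = pullback (NY U)"
  unfolding induced_nabla_def by (simp add: image_pullback openin_subset open_hull_eq)

lemma geometric_map_pullback: "geometric_map Y NY X induced_nabla pullback"
  unfolding geometric_map_def
proof (intro conjI allI impI)
  show "pullback (topspace Y) = topspace X"
    unfolding pullback_def using continuous by (auto simp: continuous_map_def)
  show "pullback (\<Union>F) = \<Union>(pullback ` F)" for F
    unfolding pullback_def by blast
  show "pullback (U \<inter> V) = pullback U \<inter> pullback V" for U V
    unfolding pullback_def by blast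
qed (simp_all add: openin_pullback induced_nabla_pullback)

lemma induced_nabla_subset_heyting_imp_iff:
  assumes "openin Y U" "openin Y V" "openin X W"
  shows "induced_nabla W \<subseteq> heyting_imp X (pullback U) (pullback V) \<longleftrightarrow>
           W \<subseteq> pullback (st_imp Y NY U V)"
proof -
  define K where "K = open_hull Y (f ` W)"
  have K: "openin Y K" unfolding K_def by (rule openin_open_hull[OF alexandroff])
  have fW: "f ` W \<subseteq> topspace Y"
    using image_subset_topspace openin_subset[OF assms(3)] .
  have "induced_nabla W \<inter> pullback U = pullback (NY K \<inter> U)"
    unfolding induced_nabla_def K_def pullback_def by blast
  then have "induced_nabla W \<subseteq> heyting_imp X (pullback U) (pullback V) \<longleftrightarrow>
               pullback (NY K \<inter> U) \<subseteq> pullback V"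
    using subset_heyting_imp_iff[OF openin_induced_nabla] by simp
  also have "\<dots> \<longleftrightarrow> NY K \<inter> U \<subseteq> V"
    using pullback_subset_iff openin_subset[OF assms(1)] by blast
  also have "\<dots> \<longleftrightarrow> NY K \<subseteq> heyting_imp Y U V"
    using subset_heyting_imp_iff[OF openin_spacetime[OF spacetime K]] by simp
  also have "\<dots> \<longleftrightarrow> K \<subseteq> st_imp Y NY U V"
    unfolding st_imp_def using subset_st_box_iff[OF spacetime K] by simp
  also have "\<dots> \<longleftrightarrow> f ` W \<subseteq> st_imp Y NY U V"
    unfolding K_def st_imp_def using open_hull_subset_iff[OF openin_st_box fW] by simp
  also have "\<dots> \<longleftrightarrow> W \<subseteq> pullback (st_imp Y NY U V)"
    using image_subset_iff_subset_pullback openin_subset[OF assms(3)] by simp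
  finally show ?thesis .
qed

lemma pullback_st_imp:
  assumes "openin Y U" "openin Y V"
  shows "pullback (st_imp Y NY U V) = st_imp X induced_nabla (pullback U) (pullback V)"
proof -
  have "openin X (pullback (st_imp Y NY U V))"
    unfolding st_imp_def by (intro openin_pullback openin_st_box)
  then have "st_box X induced_nabla (heyting_imp X (pullback U) (pullback V)) = pullback (st_imp Y NY U V)"
    using induced_nabla_subset_heyting_imp_iff[OF assms] by (intro st_box_eqI)
  then show ?thesis unfolding st_imp_def[of X] by simp
qed

lemma logical_map_pullback: "logical_map Y NY X induced_nabla pullback"
  unfolding logical_map_def using geometric_map_pullback pullback_st_imp by blast

end

theorem corollary5p14:
  fixes X :: "'a topology" and Y :: "'b topology" and f :: "'a \<Rightarrow> 'b"
    and NY :: "'b set \<Rightarrow> 'b set"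
  assumes "alexandroff_space Y"
    and "continuous_map X Y f"
    and "f ` topspace X = topspace Y"
    and "spacetime Y NY"
  shows "\<exists>NX :: 'a set \<Rightarrow> 'a set. spacetime X NX \<and>
           logical_map Y NY X NX (\<lambda>U. topspace X \<inter> f -` U)"
proof -
  interpret alexandroff_surjection X Y f NY
    using assms by unfold_locales
  have "pullback = (\<lambda>U. topspace X \<inter> f -` U)"
    by (rule ext) (simp add: pullback_def)
  then show ?thesis
    using spacetime_induced_nabla logical_map_pullback by metis
qed

end
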